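(* Let $\Lambda,\mu,\beta,\rho,\phi,\alpha,\omega>0$, $d\ge 0$, $\psi,\theta\ge 0$, $0<\eta_C\le1$, $\eta_A\ge 1$. Consider the system, with $N=S+I+C+A+E$, \begin{align*} \dot S&=\Lambda-\frac{\beta(I+\eta_C C+\eta_A A)}{N}S-\mu S-\psi S+\theta E,\\ \dot I&=\frac{\beta(I+\eta_C C+\eta_A A)}{N}S-(\rho+\phi+\mu)I+\alpha A+\omega C,\\ \dot C&=\phi I-(\omega+\mu)C,\\ \dot A&=\rho I-(\alpha+\mu+d)A,\\ \dot E&=\psi S-(\mu+\theta)E, \end{align*} on the region $$\Omega_P=\left\{(S,I,C,A,E)\in\mathbb{R}_{\ge 0}^5: S\le\frac{(\theta+\mu)\Lambda}{\mu(\theta+\psi+\mu)},\ E\le\frac{\psi\Lambda}{\mu(\theta+\psi+\mu)},\ N\le\frac{\Lambda}{\mu}\right\}.$$ Let $\xi_1=\alpha+\mu+d$, $\xi_2=\omega+\mu$, and $$R_0=\frac{\beta\bigl(\xi_2(\xi_1+\rho\eta_A)+\eta_C\phi\xi_1\bigr)}{\mu\bigl(\xi_2(\rho+\xi_1)+\phi\xi_1+\rho d\bigr)+\rho\omega d}.$$ If $R_0<1$, then the disease-free equilibrium $$\Sigma_0=\left(\frac{(\theta+\mu)\Lambda}{\mu(\theta+\psi+\mu)},0,0,0,\frac{\psi\Lambda}{\mu(\theta+\psi+\mu)}\right)$$ is globally asymptotically stable (in $\Omega_P$).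
   Context: The model describes HIV/AIDS transmission with pre-exposure prophylaxis (PrEP): $S$ susceptible, $I$ pre-AIDS HIV-infected, $C$ HIV-infected under antiretroviral treatment, $A$ with AIDS symptoms, $E$ susceptible individuals under PrEP. $R_0$ is the basic reproduction number. *)

theory Defs
  imports "HOL-Analysis.Analysis"
begin

text \<open>State vectors (S, I, C, A, E) are elements of real^5, components 1..5 in this order.\<close>

definition mk5 :: "real \<Rightarrow> real \<Rightarrow> real \<Rightarrow> real \<Rightarrow> real \<Rightarrow> real^5" where
  "mk5 a b c e f = (\<chi> i. if i = 1 then a else if i = 2 then b else if i = 3 then c
                          else if i = 4 then e else f)"

definition hiv_rhs ::
  "real \<Rightarrow> real \<Rightarrow> real \<Rightarrow> real \<Rightarrow> real \<Rightarrow> real \<Rightarrow> real \<Rightarrow> real \<Rightarrow> real \<Rightarrow> real \<Rightarrow> real \<Rightarrow> real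
   \<Rightarrow> real^5 \<Rightarrow> real^5" where
  "hiv_rhs Lam mu beta rho phi alpha omega d psi theta etaC etaA x =
     (let S = x$1; I = x$2; C = x$3; A = x$4; E = x$5;
          N = S + I + C + A + E;
          F = beta * (I + etaC * C + etaA * A) / N * S
      in mk5 (Lam - F - mu * S - psi * S + theta * E)
             (F - (rho + phi + mu) * I + alpha * A + omega * C)
             (phi * I - (omega + mu) * C)
             (rho * I - (alpha + mu + d) * A)
             (psi * S - (mu + theta) * E))"

definition Omega_P :: "real \<Rightarrow> real \<Rightarrow> real \<Rightarrow> real \<Rightarrow> (real^5) set" where
  "Omega_P Lam mu psi theta =
     {x. (\<forall>i. 0 \<le> x$i)
       \<and> x$1 \<le> (theta + mu) * Lam / (mu * (theta + psi + mu))
       \<and> x$5 \<le> psi * Lam / (mu * (theta + psi + mu))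
       \<and> x$1 + x$2 + x$3 + x$4 + x$5 \<le> Lam / mu}"

definition R0_hiv ::
  "real \<Rightarrow> real \<Rightarrow> real \<Rightarrow> real \<Rightarrow> real \<Rightarrow> real \<Rightarrow> real \<Rightarrow> real \<Rightarrow> real \<Rightarrow> real" where
  "R0_hiv mu beta rho phi alpha omega d etaC etaA =
     (let xi1 = alpha + mu + d; xi2 = omega + mu
      in beta * (xi2 * (xi1 + rho * etaA) + etaC * phi * xi1)
         / (mu * (xi2 * (rho + xi1) + phi * xi1 + rho * d) + rho * omega * d))"

definition ode_solution :: "('a::real_normed_vector \<Rightarrow> 'a) \<Rightarrow> (real \<Rightarrow> 'a) \<Rightarrow> bool" where
  "ode_solution f x \<longleftrightarrow> (\<forall>t\<ge>0. (x has_vector_derivative f (x t)) (at t within {0..}))"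

definition gas_in :: "('a::real_normed_vector \<Rightarrow> 'a) \<Rightarrow> 'a set \<Rightarrow> 'a \<Rightarrow> bool" where
  "gas_in f X p \<longleftrightarrow>
     p \<in> X \<and> f p = 0 \<and>
     (\<forall>\<epsilon>>0. \<exists>\<delta>>0. \<forall>x. ode_solution f x \<and> x 0 \<in> X \<and> dist (x 0) p < \<delta>
                         \<longrightarrow> (\<forall>t\<ge>0. dist (x t) p < \<epsilon>)) \<and>
     (\<forall>x. ode_solution f x \<and> x 0 \<in> X \<longrightarrow> (x \<longlongrightarrow> p) at_top)"

end

theory Submission
  imports Defs
begin

text \<open>Solutions starting in the nonnegative orthant stay there: wherever a component is negative
  its derivative is bounded below by a multiple of the total negative mass, so the sum of the
  squared negative parts obeys a linear differential inequality and stays zero (Gronwall). This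
  needs some care near the origin, where the incidence term is singular; there the flow points
  along the \<open>S\<close>-axis.

  On the orthant the incidence is at most \<open>beta\<close> times the infectivity, and \<open>R0 < 1\<close> is
  equivalent to the existence of positive weights for which \<open>L = I + wC C + wA A\<close> satisfies
  \<open>L' \<le> -c L\<close>. The deviations of \<open>S + E\<close> and \<open>E\<close> from their disease-free values solve a
  stable linear system forced only by the incidence, which is bounded by a multiple of \<open>L\<close>.
  Hence a quadratic form in these deviations and \<open>L\<close> decays exponentially along solutions;
  being equivalent to the squared distance to the disease-free equilibrium, it yields
  exponential, hence global asymptotic, stability.\<close>

lemma exhaust_5: fixes i :: 5 shows "i = 1 \<or> i = 2 \<or> i = 3 \<or> i = 4 \<or> i = 5"
proof (induct i)
  case (of_int z)
  then have "z = 0 \<or> z = 1 \<or> z = 2 \<or> z = 3 \<or> z = 4" by fastforce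
  then show ?case by auto
qed

lemma all_5_iff: "(\<forall>i::5. P i) \<longleftrightarrow> P 1 \<and> P 2 \<and> P 3 \<and> P 4 \<and> P 5"
  by (metis exhaust_5)

lemma sum_UNIV_5: "(\<Sum>i\<in>UNIV. g i) = g 1 + g 2 + g 3 + g (4::5) + g 5"
proof -
  have U: "(UNIV :: 5 set) = {1, 2, 3, 4, 5}" using exhaust_5 by auto
  show ?thesis unfolding U by (simp add: ac_simps)
qed

lemma mk5_nth [simp]:
  "mk5 a b c e g $ 1 = a" "mk5 a b c e g $ 2 = b" "mk5 a b c e g $ 3 = c"
  "mk5 a b c e g $ 4 = e" "mk5 a b c e g $ 5 = g"
  by (simp_all add: mk5_def)

lemma vec5_eq_iff:
  "(x::real^5) = y \<longleftrightarrow> x$1 = y$1 \<and> x$2 = y$2 \<and> x$3 = y$3 \<and> x$4 = y$4 \<and> x$5 = y$5"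
  by (simp add: vec_eq_iff all_5_iff)

lemma dist_vec5_squared:
  "(dist x (y::real^5))\<^sup>2 = (x$1-y$1)\<^sup>2 + (x$2-y$2)\<^sup>2 + (x$3-y$3)\<^sup>2 + (x$4-y$4)\<^sup>2 + (x$5-y$5)\<^sup>2"
  unfolding dist_norm norm_vec_def L2_set_def by (simp add: sum_UNIV_5 sum_nonneg)

lemma two_mult_le_weighted_squares:
  fixes a b c :: real
  assumes "c > 0"
  shows "2 * a * b \<le> c * a\<^sup>2 + b\<^sup>2 / c"
proof -
  have "0 \<le> (c * a - b)\<^sup>2 / c" using assms by simp
  also have "\<dots> = c * a\<^sup>2 - 2 * a * b + b\<^sup>2 / c"
    using assms by (simp add: power2_eq_square field_simps)
  finally show ?thesis by simp
qed

text \<open>Derivative of the quadratic form \<open>A p\<^sup>2 + e\<^sup>2 + K L\<^sup>2\<close> along a stable linear system in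
  \<open>(p, e)\<close> forced by \<open>0 \<le> F \<le> B L\<close>, where \<open>L\<close> decays at rate \<open>c\<close>: the constants
  \<open>A\<close> and \<open>K\<close> are chosen large enough to absorb the cross terms.\<close>
lemma quadratic_lyapunov_estimate:
  fixes mu lam c psi B F L L' p e A K :: real
  assumes "mu > 0" "lam \<ge> mu" "c > 0" "B \<ge> 0"
    and "0 \<le> F" "F \<le> B * L" "L \<ge> 0" "L' \<le> - c * L"
    and A: "A = 2 * psi\<^sup>2 / (lam * mu) + 1" and K: "K = A * B\<^sup>2 / (mu * c) + 1"
  shows "2 * A * p * (- mu * p - F) + 2 * e * (psi * p - lam * e) + 2 * K * L * L'
    \<le> - min (mu / 2) c * (A * p\<^sup>2 + e\<^sup>2 + K * L\<^sup>2)"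
proof -
  have "lam > 0" using assms by simp
  have "A \<ge> 1" "K \<ge> 1" using A K assms \<open>lam > 0\<close> by simp_all
  define k where "k = min (mu / 2) c"
  have "k \<le> mu / 2" "k \<le> c" "k \<le> lam" using assms by (auto simp: k_def)
  have s1: "2 * (- p) * F \<le> mu * p\<^sup>2 + F\<^sup>2 / mu"
    using two_mult_le_weighted_squares[OF \<open>mu > 0\<close>, of "- p" F] by simp
  have s2: "2 * e * (psi * p) \<le> lam * e\<^sup>2 + (psi * p)\<^sup>2 / lam"
    by (rule two_mult_le_weighted_squares[OF \<open>lam > 0\<close>])
  have "F\<^sup>2 \<le> (B * L)\<^sup>2" using assms by (intro power_mono) auto
  then have s3: "A / mu * F\<^sup>2 \<le> (K - 1) * c * L\<^sup>2"
    using assms \<open>A \<ge> 1\<close> by (simp add: K power_mult_distrib field_simps mult_left_mono)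
  have s4: "2 * K * L * L' \<le> 2 * K * L * (- c * L)"
    using assms \<open>K \<ge> 1\<close> by (intro mult_left_mono) auto
  have "2 * A * p * (- mu * p - F) + 2 * e * (psi * p - lam * e) + 2 * K * L * L'
      \<le> - (A * mu - psi\<^sup>2 / lam) * p\<^sup>2 - lam * e\<^sup>2 - (K + 1) * c * L\<^sup>2"
    using mult_left_mono[OF s1, of A] \<open>A \<ge> 1\<close> s2 s3 s4
    by (simp add: power2_eq_square field_simps)
  also have "\<dots> \<le> - k * A * p\<^sup>2 - k * e\<^sup>2 - k * K * L\<^sup>2"
  proof -
    have "k * A \<le> mu / 2 * A" using \<open>k \<le> mu / 2\<close> \<open>A \<ge> 1\<close> by (intro mult_right_mono) auto
    also have "\<dots> = psi\<^sup>2 / lam + mu / 2" using \<open>mu > 0\<close> \<open>lam > 0\<close> by (simp add: A field_simps)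
    also have "\<dots> \<le> A * mu - psi\<^sup>2 / lam" using \<open>mu > 0\<close> \<open>lam > 0\<close> by (simp add: A field_simps)
    finally have "k * A \<le> A * mu - psi\<^sup>2 / lam" .
    moreover have "k * K \<le> c * K" using \<open>k \<le> c\<close> \<open>K \<ge> 1\<close> by (intro mult_right_mono) auto
    then have "k * K \<le> (K + 1) * c" using \<open>c > 0\<close> by (simp add: algebra_simps)
    ultimately show ?thesis using \<open>k \<le> lam\<close>
      by (intro diff_mono mult_right_mono) auto
  qed
  finally show ?thesis by (simp add: k_def algebra_simps)
qed

lemma gronwall_exp_bound:
  fixes g g' :: "real \<Rightarrow> real"
  assumes "a \<le> b" "continuous_on {a..b} g"
    and "\<And>t. a < t \<Longrightarrow> t < b \<Longrightarrow> (g has_real_derivative g' t) (at t)"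
    and "\<And>t. a < t \<Longrightarrow> t < b \<Longrightarrow> g' t \<le> k * g t"
  shows "g b \<le> g a * exp (k * (b - a))"
proof -
  define h where "h t = g t * exp (- (k * (t - a)))" for t
  have "h b \<le> h a"
  proof (rule DERIV_nonpos_imp_decreasing_open[OF assms(1)])
    fix t assume t: "a < t" "t < b"
    have "(h has_real_derivative (g' t - k * g t) * exp (- (k * (t - a)))) (at t)"
      unfolding h_def by (auto intro!: derivative_eq_intros assms(3)[OF t] simp: algebra_simps)
    moreover have "(g' t - k * g t) * exp (- (k * (t - a))) \<le> 0"
      using assms(4)[OF t] by (simp add: mult_nonpos_nonneg)
    ultimately show "\<exists>y. (h has_real_derivative y) (at t) \<and> y \<le> 0" by blast
  next
    show "continuous_on {a..b} h" unfolding h_def by (intro continuous_intros assms(2))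
  qed
  then have "g b * exp (- (k * (b - a))) * exp (k * (b - a)) \<le> g a * exp (k * (b - a))"
    by (simp add: h_def mult_right_mono)
  then show ?thesis by (simp add: mult.assoc flip: exp_add)
qed

lemma has_real_derivative_min_0_squared:
  "((\<lambda>y::real. (min y 0)\<^sup>2) has_real_derivative 2 * min z 0) (at z)"
proof (cases z "0::real" rule: linorder_cases)
  case less
  have "eventually (\<lambda>y. y\<^sup>2 = (min y 0)\<^sup>2) (nhds z)"
    using eventually_nhds_in_open[of "{..<0}" z] less by (auto elim!: eventually_mono)
  moreover have "((\<lambda>y. y\<^sup>2) has_real_derivative 2 * z) (at z)"
    by (auto intro!: derivative_eq_intros)
  ultimately show ?thesis using less by (simp add: DERIV_cong_ev)
next
  case equal
  have "((min h 0)\<^sup>2 - (min 0 0)\<^sup>2) / h = min h 0" for h :: real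
    by (cases "h < 0") (auto simp: power2_eq_square min_def)
  moreover have "((\<lambda>h. min h 0) \<longlongrightarrow> min 0 (0::real)) (at 0)"
    by (intro tendsto_intros)
  ultimately show ?thesis using equal by (simp add: DERIV_def)
next
  case greater
  have "eventually (\<lambda>y. 0 = (min y 0)\<^sup>2) (nhds z)"
    using eventually_nhds_in_open[of "{0<..}" z] greater by (auto elim!: eventually_mono)
  then have "DERIV (\<lambda>y. 0) z :> 0 \<longleftrightarrow> DERIV (\<lambda>y. (min y 0)\<^sup>2) z :> 0"
    by (rule DERIV_cong_ev[OF refl _ refl])
  then show ?thesis using greater by simp
qed

section \<open>Invariance of the nonnegative orthant\<close>

lemma ode_solution_continuous_on:
  assumes "ode_solution f x"
  shows "continuous_on {0..} x"
  using assms unfolding ode_solution_def continuous_on_eq_continuous_within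
  by (auto intro: has_vector_derivative_continuous)

lemma ode_solution_component_deriv:
  fixes x :: "real \<Rightarrow> real^'n"
  assumes "ode_solution f x" "t > 0"
  shows "((\<lambda>t. x t $ i) has_real_derivative f (x t) $ i) (at t)"
proof -
  have "at t within {0..} = at t"
    using assms(2) by (intro at_within_interior) auto
  then have "(x has_vector_derivative f (x t)) (at t)"
    using assms unfolding ode_solution_def by (metis less_imp_le)
  from bounded_linear.has_vector_derivative[OF bounded_linear_vec_nth this, of i]
  show ?thesis by (simp add: has_real_derivative_iff_has_vector_derivative)
qed

definition neg_energy :: "real^'n \<Rightarrow> real" where
  "neg_energy y = (\<Sum>i\<in>UNIV. (min (y$i) 0)\<^sup>2)"

definition neg_mass :: "real^'n \<Rightarrow> real" where
  "neg_mass y = (\<Sum>i\<in>UNIV. - min (y$i) 0)"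

lemma neg_energy_eq_0_iff: "neg_energy y = 0 \<longleftrightarrow> (\<forall>i. 0 \<le> y$i)"
proof -
  have "(min (y$i) 0)\<^sup>2 = 0 \<longleftrightarrow> 0 \<le> y$i" for i by (auto simp: min_def)
  then show ?thesis by (simp add: neg_energy_def sum_nonneg_eq_0_iff)
qed

lemma neg_mass_bounds: "0 \<le> neg_mass y" "- min (y$i) 0 \<le> neg_mass y"
  unfolding neg_mass_def by (auto intro: sum_nonneg member_le_sum)

lemma neg_energy_has_real_derivative:
  assumes "ode_solution f x" "t > 0"
  shows "((\<lambda>t. neg_energy (x t)) has_real_derivative
           2 * (\<Sum>i\<in>UNIV. min (x t $ i) 0 * f (x t) $ i)) (at t)"
  unfolding neg_energy_def sum_distrib_left mult.assoc[symmetric]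
  by (intro DERIV_sum DERIV_chain2[OF has_real_derivative_min_0_squared
        ode_solution_component_deriv[OF assms]])

lemma neg_part_pairing_le:
  fixes y g :: "real^'n" and K :: real
  assumes "K \<ge> 0" and lower: "\<And>j. y$j < 0 \<Longrightarrow> - K * neg_mass y \<le> g$j"
  shows "(\<Sum>j\<in>UNIV. min (y$j) 0 * g$j) \<le> (real CARD('n))\<^sup>2 * K * neg_energy y"
proof -
  define u where "u = neg_mass y"
  have "- min (y$j) 0 \<le> u" for j
    using neg_mass_bounds(2) by (simp add: u_def)
  then have term_le: "min (y$j) 0 * g$j \<le> K * u\<^sup>2" for j
  proof (cases "y$j < 0 \<and> g$j < 0")
    case True
    have "min (y$j) 0 * g$j = (- min (y$j) 0) * (- g$j)" by simp
    also have "\<dots> \<le> u * (K * u)"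
      using True lower[of j] \<open>- min (y$j) 0 \<le> u\<close> u_def by (intro mult_mono) auto
    finally show ?thesis by (simp add: power2_eq_square algebra_simps)
  next
    case False
    then have "min (y$j) 0 * g$j \<le> 0" by (auto simp: min_def mult_nonpos_nonneg)
    also have "0 \<le> K * u\<^sup>2" using assms(1) by simp
    finally show ?thesis .
  qed
  have "u\<^sup>2 \<le> neg_energy y * CARD('n)"
    using sum_squared_le_sum_of_squares[of "\<lambda>i. - min (y$i) 0" UNIV]
    by (simp add: u_def neg_mass_def neg_energy_def)
  then have "CARD('n) * (K * u\<^sup>2) \<le> CARD('n) * (K * (neg_energy y * CARD('n)))"
    using assms(1) by (intro mult_left_mono) auto
  moreover have "(\<Sum>j\<in>UNIV. min (y$j) 0 * g$j) \<le> CARD('n) * (K * u\<^sup>2)"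
    using sum_bounded_above[of UNIV "\<lambda>j. min (y$j) 0 * g$j", OF term_le] by simp
  ultimately show ?thesis by (simp add: power2_eq_square algebra_simps)
qed

lemma nonneg_on_interval_if_quasi_positive:
  fixes x :: "real \<Rightarrow> real^'n"
  assumes sol: "ode_solution f x" and T: "T \<ge> 0" and nonneg: "\<forall>i. 0 \<le> x T $ i" and "K \<ge> 0"
    and lower: "\<And>t j. t \<in> {T..T+h} \<Longrightarrow> x t $ j < 0 \<Longrightarrow> - K * neg_mass (x t) \<le> f (x t) $ j"
  shows "\<forall>t\<in>{T..T+h}. \<forall>i. 0 \<le> x t $ i"
proof
  fix b assume b: "b \<in> {T..T+h}"
  have "neg_energy (x b) \<le> neg_energy (x T) * exp (2 * (real CARD('n))\<^sup>2 * K * (b - T))"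
  proof (rule gronwall_exp_bound)
    show "continuous_on {T..b} (\<lambda>t. neg_energy (x t))"
      using continuous_on_subset[OF ode_solution_continuous_on[OF sol], of "{T..b}"] T
      unfolding neg_energy_def by (auto intro!: continuous_intros)
    fix t assume t: "T < t" "t < b"
    show "((\<lambda>t. neg_energy (x t)) has_real_derivative
           2 * (\<Sum>i\<in>UNIV. min (x t $ i) 0 * f (x t) $ i)) (at t)"
      using t T by (intro neg_energy_has_real_derivative[OF sol]) auto
    have "(\<Sum>i\<in>UNIV. min (x t $ i) 0 * f (x t) $ i) \<le> (real CARD('n))\<^sup>2 * K * neg_energy (x t)"
      using t b by (intro neg_part_pairing_le \<open>K \<ge> 0\<close> lower) auto
    then show "2 * (\<Sum>i\<in>UNIV. min (x t $ i) 0 * f (x t) $ i)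
               \<le> 2 * (real CARD('n))\<^sup>2 * K * neg_energy (x t)" by simp
  qed (use b in auto)
  also have "\<dots> = 0" using nonneg by (simp add: neg_energy_eq_0_iff)
  finally have "neg_energy (x b) \<le> 0" .
  moreover have "0 \<le> neg_energy (x b)" unfolding neg_energy_def by (simp add: sum_nonneg)
  ultimately show "\<forall>i. 0 \<le> x b $ i" by (simp flip: neg_energy_eq_0_iff)
qed

lemma closed_invariant_if_locally_invariant:
  fixes x :: "real \<Rightarrow> 'a::topological_space"
  assumes "closed K" and cont: "continuous_on {0..} x" and "x 0 \<in> K"
    and local: "\<And>T. T \<ge> 0 \<Longrightarrow> x T \<in> K \<Longrightarrow> \<exists>h>0. \<forall>t\<in>{T..T+h}. x t \<in> K"
    and "t \<ge> 0"
  shows "x t \<in> K"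
proof (rule ccontr)
  assume "x t \<notin> K"
  define B where "B = {s. 0 \<le> s \<and> x s \<notin> K}"
  define T where "T = Inf B"
  have "B \<noteq> {}" "bdd_below B" using \<open>x t \<notin> K\<close> \<open>t \<ge> 0\<close> by (auto simp: B_def bdd_below_def)
  have "T \<ge> 0" unfolding T_def using \<open>B \<noteq> {}\<close> by (intro cInf_greatest) (auto simp: B_def)
  have before: "{0..<T} \<subseteq> {0..} \<inter> x -` K"
    using cInf_lower[OF _ \<open>bdd_below B\<close>] by (force simp: B_def T_def)
  have "x T \<in> K"
  proof (cases "T = 0")
    case False
    have "closed ({0..} \<inter> x -` K)"
      by (rule continuous_closed_preimage[OF cont closed_atLeast \<open>closed K\<close>])
    then have "closure {0..<T} \<subseteq> {0..} \<inter> x -` K"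
      by (rule closure_minimal[OF before])
    then show ?thesis using False \<open>T \<ge> 0\<close> by auto
  qed (use \<open>x 0 \<in> K\<close> in simp)
  then obtain h where "h > 0" and after: "\<forall>s\<in>{T..T+h}. x s \<in> K"
    using local \<open>T \<ge> 0\<close> by blast
  have "T + h \<le> Inf B"
  proof (rule cInf_greatest[OF \<open>B \<noteq> {}\<close>])
    fix s assume "s \<in> B"
    then show "T + h \<le> s" using before after by (force simp: B_def not_le)
  qed
  then show False using \<open>h > 0\<close> by (simp add: T_def)
qed

lemma nonneg_invariant_if_locally_quasi_positive:
  fixes x :: "real \<Rightarrow> real^'n"
  assumes sol: "ode_solution f x" and "\<forall>i. 0 \<le> x 0 $ i"
    and local: "\<And>T. T \<ge> 0 \<Longrightarrow> \<forall>i. 0 \<le> x T $ i \<Longrightarrow> \<exists>h>0. \<exists>K\<ge>0.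
                  \<forall>t\<in>{T..T+h}. \<forall>j. x t $ j < 0 \<longrightarrow> - K * neg_mass (x t) \<le> f (x t) $ j"
    and "t \<ge> 0"
  shows "\<forall>i. 0 \<le> x t $ i"
proof -
  have "x t \<in> {y. \<forall>i. 0 \<le> y $ i}"
  proof (rule closed_invariant_if_locally_invariant
      [OF closed_positive_orthant ode_solution_continuous_on[OF sol] _ _ \<open>t \<ge> 0\<close>])
    fix T :: real assume "T \<ge> 0" "x T \<in> {y. \<forall>i. 0 \<le> y $ i}"
    then obtain h K where "h > 0" "K \<ge> 0"
      and "\<forall>t\<in>{T..T+h}. \<forall>j. x t $ j < 0 \<longrightarrow> - K * neg_mass (x t) \<le> f (x t) $ j"
      using local by blast
    then have "\<forall>s\<in>{T..T+h}. \<forall>i. 0 \<le> x s $ i"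
      using \<open>T \<ge> 0\<close> \<open>x T \<in> _\<close> by (intro nonneg_on_interval_if_quasi_positive[OF sol]) auto
    then show "\<exists>h>0. \<forall>s\<in>{T..T+h}. x s \<in> {y. \<forall>i. 0 \<le> y $ i}" using \<open>h > 0\<close> by auto
  qed (use assms(2) in simp)
  then show ?thesis by simp
qed

section \<open>Exponential stability\<close>

lemma gas_in_if_exponential_decay:
  fixes f :: "'a::real_normed_vector \<Rightarrow> 'a"
  assumes "p \<in> X" "f p = 0" "k > 0" "C \<ge> 0"
    and decay: "\<And>x t. ode_solution f x \<Longrightarrow> x 0 \<in> X \<Longrightarrow> t \<ge> 0 \<Longrightarrow>
                  (dist (x t) p)\<^sup>2 \<le> C * (dist (x 0) p)\<^sup>2 * exp (- k * t)"
  shows "gas_in f X p"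
  unfolding gas_in_def
proof (intro conjI allI impI assms(1,2))
  fix \<epsilon> :: real assume "\<epsilon> > 0"
  define \<delta> where "\<delta> = \<epsilon> / sqrt (C + 1)"
  have "\<delta> > 0" using \<open>\<epsilon> > 0\<close> \<open>C \<ge> 0\<close> by (simp add: \<delta>_def)
  have "C * \<delta>\<^sup>2 < \<epsilon>\<^sup>2"
    using \<open>\<epsilon> > 0\<close> \<open>C \<ge> 0\<close> by (simp add: \<delta>_def power_divide field_simps)
  have "dist (x t) p < \<epsilon>"
    if "ode_solution f x" "x 0 \<in> X" "dist (x 0) p < \<delta>" "t \<ge> 0" for x t
  proof -
    have "(dist (x t) p)\<^sup>2 \<le> C * (dist (x 0) p)\<^sup>2 * exp (- k * t)" by (rule decay[OF that(1,2,4)])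
    also have "\<dots> \<le> C * (dist (x 0) p)\<^sup>2"
      using \<open>k > 0\<close> \<open>C \<ge> 0\<close> that(4) by (intro mult_left_le) auto
    also have "\<dots> \<le> C * \<delta>\<^sup>2"
      using that(3) \<open>C \<ge> 0\<close> by (intro mult_left_mono power_mono) auto
    also have "\<dots> < \<epsilon>\<^sup>2" by fact
    finally show ?thesis using \<open>\<epsilon> > 0\<close> by (simp add: power_less_imp_less_base)
  qed
  then show "\<exists>\<delta>>0. \<forall>x. ode_solution f x \<and> x 0 \<in> X \<and> dist (x 0) p < \<delta>
                         \<longrightarrow> (\<forall>t\<ge>0. dist (x t) p < \<epsilon>)"
    using \<open>\<delta> > 0\<close> by blast
next
  fix x assume x: "ode_solution f x \<and> x 0 \<in> X"
  have "((\<lambda>t. exp (- k * t)) \<longlongrightarrow> 0) at_top"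
    using filterlim_tendsto_pos_mult_at_top[OF tendsto_const \<open>k > 0\<close> filterlim_ident]
    by (auto intro: filterlim_compose[OF exp_at_bot] simp: filterlim_uminus_at_bot)
  then have "((\<lambda>t. C * (dist (x 0) p)\<^sup>2 * exp (- k * t)) \<longlongrightarrow> C * (dist (x 0) p)\<^sup>2 * 0) at_top"
    by (intro tendsto_mult tendsto_const)
  from tendsto_real_sqrt[OF this]
  have bound_lim: "((\<lambda>t. sqrt (C * (dist (x 0) p)\<^sup>2 * exp (- k * t))) \<longlongrightarrow> 0) at_top"
    by simp
  have "\<forall>\<^sub>F t in at_top. dist (x t) p \<le> sqrt (C * (dist (x 0) p)\<^sup>2 * exp (- k * t))"
    using eventually_ge_at_top[of 0]
    by eventually_elim (use x decay real_le_rsqrt in blast)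
  then have "((\<lambda>t. dist (x t) p) \<longlongrightarrow> 0) at_top"
    by (intro tendsto_sandwich[OF _ _ tendsto_const bound_lim]) auto
  then show "(x \<longlongrightarrow> p) at_top" by (rule iffD2[OF tendsto_dist_iff])
qed

section \<open>The HIV/PrEP model\<close>

locale hiv_prep =
  fixes Lam mu beta rho phi alpha omega d psi theta etaC etaA :: real
  assumes Lam: "Lam > 0" and mu: "mu > 0" and beta: "beta > 0" and rho: "rho > 0"
    and phi: "phi > 0" and alpha: "alpha > 0" and omega: "omega > 0"
    and d: "d \<ge> 0" and psi: "psi \<ge> 0" and theta: "theta \<ge> 0"
    and etaC: "0 < etaC" "etaC \<le> 1" and etaA: "etaA \<ge> 1"
begin

abbreviation "f \<equiv> hiv_rhs Lam mu beta rho phi alpha omega d psi theta etaC etaA"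

definition pop :: "real^5 \<Rightarrow> real" where
  "pop y = y$1 + y$2 + y$3 + y$4 + y$5"

definition infectivity :: "real^5 \<Rightarrow> real" where
  "infectivity y = y$2 + etaC * y$3 + etaA * y$4"

definition incidence :: "real^5 \<Rightarrow> real" where
  "incidence y = beta * infectivity y / pop y * y$1"

lemma rhs_nth:
  "f y $ 1 = Lam - incidence y - mu * y$1 - psi * y$1 + theta * y$5"
  "f y $ 2 = incidence y - (rho + phi + mu) * y$2 + alpha * y$4 + omega * y$3"
  "f y $ 3 = phi * y$2 - (omega + mu) * y$3"
  "f y $ 4 = rho * y$2 - (alpha + mu + d) * y$4"
  "f y $ 5 = psi * y$1 - (mu + theta) * y$5"
  by (simp_all add: hiv_rhs_def Let_def incidence_def infectivity_def pop_def)

lemma rhs_origin: "f 0 = mk5 Lam 0 0 0 0"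
  unfolding vec5_eq_iff by (simp add: rhs_nth incidence_def pop_def infectivity_def)

text \<open>Control of the incidence term near the nonnegative orthant: either the state is the origin,
  where the incidence vanishes because of the convention \<open>x / 0 = 0\<close>, or every component is
  at most \<open>R\<close> times the total population.\<close>
definition ratio_bounded :: "real \<Rightarrow> real^5 \<Rightarrow> bool" where
  "ratio_bounded R y \<longleftrightarrow> y = 0 \<or> (pop y > 0 \<and> (\<forall>j. \<bar>y$j\<bar> \<le> R * pop y))"

lemma infectivity_ge_neg_mass: "- ((1 + etaC + etaA) * neg_mass y) \<le> infectivity y"
proof -
  have ge: "- neg_mass y \<le> y$i" for i using neg_mass_bounds(2)[of y i] by simp
  show ?thesis
    using ge[of 2] mult_left_mono[OF ge[of 3], of etaC] mult_left_mono[OF ge[of 4], of etaA] etaC etaA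
    by (simp add: infectivity_def algebra_simps)
qed

lemma abs_infectivity_le:
  assumes "\<And>j. \<bar>y$j\<bar> \<le> r"
  shows "\<bar>infectivity y\<bar> \<le> (1 + etaC + etaA) * r"
proof -
  have "\<bar>infectivity y\<bar> \<le> \<bar>y$2\<bar> + \<bar>etaC * y$3\<bar> + \<bar>etaA * y$4\<bar>"
    unfolding infectivity_def
    by (rule order_trans[OF abs_triangle_ineq add_right_mono[OF abs_triangle_ineq]])
  also have "\<dots> = \<bar>y$2\<bar> + etaC * \<bar>y$3\<bar> + etaA * \<bar>y$4\<bar>"
    using etaC etaA by (simp add: abs_mult)
  also have "\<dots> \<le> r + etaC * r + etaA * r"
    using assms etaC etaA by (intro add_mono mult_left_mono) auto
  finally show ?thesis by (simp add: algebra_simps)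
qed

lemma infectivity_ratio_bounds:
  assumes N: "pop y > 0" and bnd: "\<And>j. \<bar>y$j\<bar> \<le> R * pop y" and "R \<ge> 0"
  shows "- ((1 + etaC + etaA) * R * neg_mass y) \<le> infectivity y * (y$1 / pop y)"
    and "y$1 < 0 \<Longrightarrow> infectivity y * (y$1 / pop y) \<le> (1 + etaC + etaA) * R * neg_mass y"
proof -
  define a where "a = 1 + etaC + etaA"
  define u where "u = neg_mass y"
  define q where "q = y$1 / pop y"
  have "a \<ge> 0" "u \<ge> 0" using etaC etaA neg_mass_bounds by (auto simp: a_def u_def)
  have Ylow: "- (a * u) \<le> infectivity y" using infectivity_ge_neg_mass[of y] unfolding a_def u_def .
  have qR: "\<bar>q\<bar> \<le> R" using bnd[of 1] N by (simp add: q_def abs_div divide_le_eq)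
  have "- (a * R * u) \<le> infectivity y * q \<and> (y$1 < 0 \<longrightarrow> infectivity y * q \<le> a * R * u)"
  proof (cases "y$1 < 0")
    case True
    have "q \<le> 0" using True N by (simp add: q_def divide_nonpos_pos)
    have "infectivity y * q \<le> (a * u) * (- q)" using mult_right_mono_neg[OF Ylow \<open>q \<le> 0\<close>] by simp
    also have "\<dots> \<le> (a * u) * R" using qR \<open>q \<le> 0\<close> \<open>a \<ge> 0\<close> \<open>u \<ge> 0\<close> by (intro mult_left_mono) auto
    finally have upper: "infectivity y * q \<le> a * R * u" by (simp add: algebra_simps)
    have "\<bar>infectivity y * q\<bar> = \<bar>infectivity y\<bar> * \<bar>y$1\<bar> / pop y"
      using N by (simp add: q_def abs_mult abs_div)
    also have "\<dots> \<le> (a * R * pop y) * \<bar>y$1\<bar> / pop y"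
      using abs_infectivity_le[OF bnd] N by (intro divide_right_mono mult_right_mono) (auto simp: a_def)
    also have "\<dots> = a * R * \<bar>y$1\<bar>" using N by simp
    also have "\<dots> \<le> a * R * u"
      using neg_mass_bounds(2)[of y 1] True \<open>a \<ge> 0\<close> \<open>R \<ge> 0\<close> by (intro mult_left_mono) (auto simp: u_def)
    finally have "- (a * R * u) \<le> infectivity y * q" by (simp add: abs_le_iff)
    with upper show ?thesis by simp
  next
    case False
    have "q \<ge> 0" using False N by (simp add: q_def)
    have "- (a * u) * q \<le> infectivity y * q" using Ylow \<open>q \<ge> 0\<close> by (rule mult_right_mono)
    moreover have "(a * u) * q \<le> (a * u) * R" using qR \<open>q \<ge> 0\<close> \<open>a \<ge> 0\<close> \<open>u \<ge> 0\<close> by (intro mult_left_mono) auto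
    ultimately show ?thesis using False by (simp add: algebra_simps)
  qed
  then show "- ((1 + etaC + etaA) * R * neg_mass y) \<le> infectivity y * (y$1 / pop y)"
    and "y$1 < 0 \<Longrightarrow> infectivity y * (y$1 / pop y) \<le> (1 + etaC + etaA) * R * neg_mass y"
    by (simp_all add: a_def u_def q_def)
qed

lemma incidence_bounds:
  assumes "ratio_bounded R y" "R \<ge> 0"
  shows "- (beta * (1 + etaC + etaA) * R) * neg_mass y \<le> incidence y"
    and "y$1 < 0 \<Longrightarrow> incidence y \<le> beta * (1 + etaC + etaA) * R * neg_mass y"
proof -
  define X where "X = infectivity y * (y$1 / pop y)"
  define b where "b = (1 + etaC + etaA) * R * neg_mass y"
  have inc: "incidence y = beta * X" by (simp add: incidence_def X_def)
  have lo: "- b \<le> X" and hi: "y$1 < 0 \<Longrightarrow> X \<le> b"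
    using assms infectivity_ratio_bounds[of y R] etaC etaA neg_mass_bounds(1)[of y]
    by (cases "y = 0"; auto simp: ratio_bounded_def X_def b_def)+
  have "beta * (- b) \<le> beta * X" using lo beta by (intro mult_left_mono) auto
  moreover have "y$1 < 0 \<Longrightarrow> beta * X \<le> beta * b" using hi beta by (intro mult_left_mono) auto
  ultimately show "- (beta * (1 + etaC + etaA) * R) * neg_mass y \<le> incidence y"
    and "y$1 < 0 \<Longrightarrow> incidence y \<le> beta * (1 + etaC + etaA) * R * neg_mass y"
    unfolding inc by (simp_all add: b_def algebra_simps)
qed

lemma incidence_nonneg_bounds:
  assumes "\<forall>i. 0 \<le> y $ i"
  shows "0 \<le> incidence y" "incidence y \<le> beta * infectivity y"
proof -
  have "0 \<le> infectivity y" "0 \<le> y$1" "y$1 \<le> pop y"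
    using assms etaC etaA by (simp_all add: infectivity_def pop_def all_5_iff)
  moreover have "infectivity y / pop y * y$1 \<le> infectivity y"
    using calculation by (cases "pop y = 0") (auto simp: divide_le_eq mult_left_mono)
  moreover have inc: "incidence y = beta * (infectivity y / pop y * y$1)" by (simp add: incidence_def)
  ultimately show "0 \<le> incidence y" "incidence y \<le> beta * infectivity y"
    unfolding inc using beta by (simp, intro mult_left_mono) auto
qed

lemma rhs_ge_at_negative_component:
  assumes "ratio_bounded R y" "R \<ge> 0" "y$j < 0"
  shows "- (beta * (1 + etaC + etaA) * R + alpha + omega + phi + rho + psi + theta) * neg_mass y
         \<le> f y $ j"
proof -
  define u where "u = neg_mass y"
  have "u \<ge> 0" using neg_mass_bounds(1) by (simp add: u_def)
  have ge: "- u \<le> y$i" for i using neg_mass_bounds(2)[of y i] by (simp add: u_def)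
  have lin: "c * (- u) \<le> c * y$i" if "c \<ge> 0" for c i using ge[of i] that by (rule mult_left_mono)
  have rates: "0 \<le> alpha * u" "0 \<le> omega * u" "0 \<le> phi * u" "0 \<le> rho * u" "0 \<le> psi * u"
    "0 \<le> theta * u" "0 \<le> beta * (1 + etaC + etaA) * R * u"
    using \<open>u \<ge> 0\<close> alpha omega phi rho psi theta beta etaC etaA \<open>R \<ge> 0\<close> by simp_all
  have inc: "- (beta * (1 + etaC + etaA) * R) * u \<le> incidence y"
    "y$1 < 0 \<Longrightarrow> incidence y \<le> beta * (1 + etaC + etaA) * R * u"
    using incidence_bounds[OF assms(1,2)] by (simp_all add: u_def)
  have own: "c * y$j \<le> 0" if "c \<ge> 0" for c using assms(3) that by (simp add: mult_nonneg_nonpos)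
  have "j = 1 \<or> j = 2 \<or> j = 3 \<or> j = 4 \<or> j = 5" by (rule exhaust_5)
  then show ?thesis
  proof (elim disjE)
    assume "j = 1"
    then show ?thesis using assms(3) inc(2) lin[of theta 5] mu psi theta Lam rates
        own[of "mu + psi"] by (simp add: rhs_nth u_def algebra_simps)
  next
    assume "j = 2"
    then show ?thesis using assms(3) inc(1) lin[of alpha 4] lin[of omega 3] own[of "rho + phi + mu"]
        mu phi rho alpha omega rates by (simp add: rhs_nth u_def algebra_simps)
  next
    assume "j = 3"
    then show ?thesis using assms(3) lin[of phi 2] own[of "omega + mu"] mu omega phi rates
      by (simp add: rhs_nth u_def algebra_simps)
  next
    assume "j = 4"
    then show ?thesis using assms(3) lin[of rho 2] own[of "alpha + mu + d"] mu alpha d rho rates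
      by (simp add: rhs_nth u_def algebra_simps)
  next
    assume "j = 5"
    then show ?thesis using assms(3) lin[of psi 1] own[of "mu + theta"] mu theta psi rates
      by (simp add: rhs_nth u_def algebra_simps)
  qed
qed

lemma pop_lipschitz: "\<bar>pop y - pop z\<bar> \<le> 5 * dist y z"
proof -
  have comp: "\<bar>(y - z)$j\<bar> \<le> dist y z" for j
    unfolding dist_norm by (rule component_le_norm_cart)
  show ?thesis
    using comp[of 1] comp[of 2] comp[of 3] comp[of 4] comp[of 5] by (simp add: pop_def abs_le_iff)
qed

lemma ratio_bounded_near_positive_pop:
  fixes x :: "real \<Rightarrow> real^5" and T :: real
  assumes cont: "continuous (at T within {0..}) x" and "T \<ge> 0" and N0: "pop (x T) > 0"
  shows "\<exists>h>0. \<exists>R\<ge>0. \<forall>t\<in>{T..T+h}. ratio_bounded R (x t)"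
proof -
  define e where "e = min 1 (pop (x T) / 10)"
  have "e > 0" using N0 by (simp add: e_def)
  then obtain \<delta> where "\<delta> > 0" and close: "\<And>t. t \<in> {0..} \<Longrightarrow> dist t T < \<delta> \<Longrightarrow> dist (x t) (x T) < e"
    using cont unfolding continuous_within_eps_delta by blast
  define R where "R = 2 * (norm (x T) + 1) / pop (x T)"
  have "R \<ge> 0" using N0 by (simp add: R_def)
  have "ratio_bounded R (x t)" if t: "t \<in> {T..T+\<delta>/2}" for t
  proof -
    have near: "dist (x t) (x T) < e" using t \<open>T \<ge> 0\<close> \<open>\<delta> > 0\<close> by (intro close) (auto simp: dist_real_def)
    have "\<bar>pop (x t) - pop (x T)\<bar> < 5 * e" using pop_lipschitz[of "x t" "x T"] near by linarith
    then have Nt: "pop (x t) > pop (x T) / 2" unfolding e_def by linarith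
    have "\<bar>x t $ j\<bar> \<le> R * pop (x t)" for j
    proof -
      have "\<bar>x t $ j\<bar> \<le> norm (x t)" by (rule component_le_norm_cart)
      also have "\<dots> \<le> norm (x T) + dist (x t) (x T)" by (simp add: dist_norm norm_triangle_sub)
      also have "\<dots> \<le> R * (pop (x T) / 2)" using near N0 by (simp add: R_def e_def)
      also have "\<dots> \<le> R * pop (x t)" using Nt \<open>R \<ge> 0\<close> by (intro mult_left_mono) auto
      finally show ?thesis .
    qed
    then show ?thesis using Nt N0 by (simp add: ratio_bounded_def)
  qed
  then show ?thesis using \<open>R \<ge> 0\<close> \<open>\<delta> > 0\<close> by (intro exI[of _ "\<delta>/2"]) auto
qed

lemma ratio_bounded_near_S_axis:
  assumes "c \<ge> 0" and "\<bar>y$1 - c\<bar> \<le> c / 10" and others: "\<And>j. j \<noteq> 1 \<Longrightarrow> \<bar>y$j\<bar> \<le> c / 10"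
  shows "ratio_bounded 4 y"
proof (cases "c = 0")
  case True
  then have "y = 0" using assms by (auto simp: vec5_eq_iff)
  then show ?thesis by (simp add: ratio_bounded_def)
next
  case False
  have "\<bar>y$2\<bar> \<le> c / 10" "\<bar>y$3\<bar> \<le> c / 10" "\<bar>y$4\<bar> \<le> c / 10" "\<bar>y$5\<bar> \<le> c / 10"
    using others[of 2] others[of 3] others[of 4] others[of 5] by simp_all
  then have N: "pop y \<ge> c / 2" using assms(2) unfolding pop_def abs_le_iff by linarith
  have bound: "\<bar>y$j\<bar> \<le> c + c / 10" for j
  proof (cases "j = 1")
    case True
    show ?thesis unfolding True using assms(1,2) unfolding abs_le_iff by linarith
  qed (use others \<open>c \<ge> 0\<close> in force)
  have "\<bar>y$j\<bar> \<le> 4 * pop y" for j using bound[of j] N \<open>c \<ge> 0\<close> by linarith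
  moreover have "pop y > 0" using N False \<open>c \<ge> 0\<close> by linarith
  ultimately show ?thesis by (simp add: ratio_bounded_def)
qed

text \<open>At the origin the flow points along the \<open>S\<close>-axis, so just after a visit to the origin
  the susceptibles dominate all other components.\<close>
lemma ratio_bounded_near_origin:
  assumes sol: "ode_solution f x" and "T \<ge> 0" and xT: "x T = 0"
  shows "\<exists>h>0. \<forall>t\<in>{T..T+h}. ratio_bounded 4 (x t)"
proof -
  define v where "v = mk5 Lam 0 0 0 0"
  have "Lam / 10 > 0" using Lam by simp
  have "(x has_derivative (\<lambda>h. h *\<^sub>R v)) (at T within {0..})"
    using sol \<open>T \<ge> 0\<close> xT rhs_origin unfolding ode_solution_def has_vector_derivative_def v_def by auto
  then obtain \<delta> where "\<delta> > 0" and approx: "\<And>t. t \<in> {0..} \<Longrightarrow> norm (t - T) < \<delta> \<Longrightarrow>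
      norm (x t - x T - (t - T) *\<^sub>R v) \<le> Lam / 10 * norm (t - T)"
    using \<open>Lam / 10 > 0\<close> unfolding has_derivative_within_alt by blast
  have "ratio_bounded 4 (x t)" if t: "t \<in> {T..T+\<delta>/2}" for t
  proof (rule ratio_bounded_near_S_axis)
    define s where "s = t - T"
    have "s \<ge> 0" using t by (simp add: s_def)
    then show "Lam * s \<ge> 0" using Lam by simp
    have "norm (x t - s *\<^sub>R v) \<le> Lam * s / 10"
      using approx[of t] t \<open>T \<ge> 0\<close> \<open>\<delta> > 0\<close> xT \<open>s \<ge> 0\<close> by (simp add: s_def)
    then have comp: "\<bar>(x t - s *\<^sub>R v) $ j\<bar> \<le> Lam * s / 10" for j
      using component_le_norm_cart[of "x t - s *\<^sub>R v" j] by linarith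
    show "\<bar>x t $ 1 - Lam * s\<bar> \<le> Lam * s / 10" using comp[of 1] by (simp add: v_def mult.commute)
    show "\<bar>x t $ j\<bar> \<le> Lam * s / 10" if "j \<noteq> 1" for j
      using comp[of j] that exhaust_5[of j] by (auto simp: v_def)
  qed
  then show ?thesis using \<open>\<delta> > 0\<close> by (intro exI[of _ "\<delta>/2"]) auto
qed

lemma nonneg_invariant:
  assumes sol: "ode_solution f x" and "\<forall>i. 0 \<le> x 0 $ i" and "t \<ge> 0"
  shows "\<forall>i. 0 \<le> x t $ i"
proof (rule nonneg_invariant_if_locally_quasi_positive[OF sol assms(2) _ assms(3)])
  fix T :: real assume "T \<ge> 0" and nonneg: "\<forall>i. 0 \<le> x T $ i"
  obtain h R where "h > 0" "R \<ge> 0" and bounded: "\<forall>t\<in>{T..T+h}. ratio_bounded R (x t)"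
  proof (cases "x T = 0")
    case True
    then show ?thesis using ratio_bounded_near_origin[OF sol \<open>T \<ge> 0\<close>] that[of _ 4] by auto
  next
    case False
    then have "pop (x T) > 0" using nonneg by (auto simp: pop_def all_5_iff vec5_eq_iff)
    moreover have "continuous (at T within {0..}) x"
      using ode_solution_continuous_on[OF sol] \<open>T \<ge> 0\<close> by (simp add: continuous_on_eq_continuous_within)
    ultimately show ?thesis using ratio_bounded_near_positive_pop \<open>T \<ge> 0\<close> that by blast
  qed
  define K where "K = beta * (1 + etaC + etaA) * R + alpha + omega + phi + rho + psi + theta"
  have "K \<ge> 0" using \<open>R \<ge> 0\<close> etaC etaA alpha omega phi rho psi theta beta by (simp add: K_def)
  have "- K * neg_mass (x t) \<le> f (x t) $ j" if "t \<in> {T..T+h}" "x t $ j < 0" for t j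
    unfolding K_def using bounded that \<open>R \<ge> 0\<close> by (intro rhs_ge_at_negative_component) auto
  then show "\<exists>h>0. \<exists>K\<ge>0. \<forall>t\<in>{T..T+h}. \<forall>j. x t $ j < 0 \<longrightarrow> - K * neg_mass (x t) \<le> f (x t) $ j"
    using \<open>h > 0\<close> \<open>K \<ge> 0\<close> by blast
qed

definition S0 :: "real" where
  "S0 = (theta + mu) * Lam / (mu * (theta + psi + mu))"
definition E0 :: "real" where
  "E0 = psi * Lam / (mu * (theta + psi + mu))"
definition dfe :: "real^5" where
  "dfe = mk5 S0 0 0 0 E0"

lemma dfe_coordinates:
  shows "S0 + E0 = Lam / mu" "(mu + theta + psi) * E0 = psi * Lam / mu"
    and "Lam - mu * S0 - psi * S0 + theta * E0 = 0" "psi * S0 - (mu + theta) * E0 = 0"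
    and "0 \<le> S0" "0 \<le> E0"
proof -
  define D where "D = mu * (theta + psi + mu)"
  have "D > 0" using mu theta psi by (simp add: D_def)
  then show "0 \<le> S0" "0 \<le> E0" using Lam mu theta psi by (simp_all add: S0_def E0_def D_def[symmetric])
  have hS: "S0 * D = (theta + mu) * Lam" "E0 * D = psi * Lam"
    using \<open>D > 0\<close> by (simp_all add: S0_def E0_def D_def[symmetric])
  have cancel: "a = b" if "a * D = b * D" for a b using that \<open>D > 0\<close> by simp
  have "(S0 + E0) * D = (Lam / mu) * D" using hS mu by (simp add: D_def algebra_simps)
  then show "S0 + E0 = Lam / mu" by (rule cancel)
  have "((mu + theta + psi) * E0) * mu = psi * Lam" using hS by (simp add: D_def algebra_simps)
  then show "(mu + theta + psi) * E0 = psi * Lam / mu" using mu by (simp add: eq_divide_eq)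
  have "(Lam - mu * S0 - psi * S0 + theta * E0) * D = Lam * D - (mu + psi) * (S0 * D) + theta * (E0 * D)"
    by (simp add: algebra_simps)
  also have "\<dots> = 0 * D" unfolding hS by (simp add: D_def algebra_simps)
  finally show "Lam - mu * S0 - psi * S0 + theta * E0 = 0" by (rule cancel)
  have "(psi * S0 - (mu + theta) * E0) * D = psi * (S0 * D) - (mu + theta) * (E0 * D)"
    by (simp add: algebra_simps)
  also have "\<dots> = 0 * D" unfolding hS by (simp add: algebra_simps)
  finally show "psi * S0 - (mu + theta) * E0 = 0" by (rule cancel)
qed

lemma dfe_in_Omega_P: "dfe \<in> Omega_P Lam mu psi theta"
  using dfe_coordinates by (simp add: Omega_P_def dfe_def all_5_iff S0_def[symmetric] E0_def[symmetric])

lemma rhs_dfe: "f dfe = 0"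
  using dfe_coordinates(3,4) by (simp add: vec5_eq_iff rhs_nth dfe_def incidence_def infectivity_def)

end

section \<open>Below the threshold\<close>

locale hiv_prep_subthreshold = hiv_prep +
  assumes R0: "R0_hiv mu beta rho phi alpha omega d etaC etaA < 1"
begin

definition xi1 :: "real" where
  "xi1 = alpha + mu + d"
definition xi2 :: "real" where
  "xi2 = omega + mu"

text \<open>The infected classes are controlled by the linear functional \<open>load\<close>. Its weights are
  chosen so that, once the incidence is bounded by \<open>beta * infectivity\<close>, every coefficient of
  the derivative of \<open>load\<close> is negative; this works precisely because \<open>gap > 0\<close>, which is a
  rewriting of \<open>R0 < 1\<close>.\<close>
definition gap :: "real" where
  "gap = (rho + phi + mu) - beta - phi * (beta * etaC + omega) / xi2
         - rho * (beta * etaA + alpha) / xi1"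
definition slack :: "real" where
  "slack = gap / (2 * (phi + rho))"
definition wC :: "real" where
  "wC = (beta * etaC + omega) / xi2 + slack"
definition wA :: "real" where
  "wA = (beta * etaA + alpha) / xi1 + slack"
definition load :: "real^5 \<Rightarrow> real" where
  "load y = y$2 + wC * y$3 + wA * y$4"
definition load_rate :: "real" where
  "load_rate = min (gap / 2) (min (slack * xi2 / wC) (slack * xi1 / wA))"

lemma xi_pos: "xi1 > 0" "xi2 > 0"
  using alpha mu d omega by (auto simp: xi1_def xi2_def)

lemma gap_pos: "gap > 0"
proof -
  define Num where "Num = xi2 * (xi1 + rho * etaA) + etaC * phi * xi1"
  define Den where "Den = mu * (xi2 * (rho + xi1) + phi * xi1 + rho * d) + rho * omega * d"
  have "Den > 0" unfolding Den_def using mu rho phi d omega xi_pos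
    by (intro add_pos_nonneg mult_pos_pos) (auto intro!: add_pos_nonneg mult_nonneg_nonneg)
  moreover have "beta * Num / Den < 1"
    using R0 unfolding R0_hiv_def Let_def Num_def Den_def xi1_def xi2_def by simp
  ultimately have "beta * Num < Den" by (simp add: divide_less_eq)
  moreover have "gap * xi1 * xi2 = (rho + phi + mu) * xi1 * xi2 - beta * xi1 * xi2
      - phi * (beta * etaC + omega) * xi1 - rho * (beta * etaA + alpha) * xi2"
    unfolding gap_def using xi_pos by (simp add: field_simps)
  moreover have "\<dots> = Den - beta * Num"
    unfolding Den_def Num_def xi1_def xi2_def by (simp add: algebra_simps)
  ultimately have "gap * xi1 * xi2 > 0" by simp
  then show ?thesis using xi_pos by (simp add: zero_less_mult_iff)
qed

lemma weights_pos: "slack > 0" "wC > 0" "wA > 0"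
proof -
  show "slack > 0" using gap_pos phi rho by (simp add: slack_def)
  moreover have "(beta * etaC + omega) / xi2 > 0" "(beta * etaA + alpha) / xi1 > 0"
    using xi_pos beta etaC etaA omega alpha by (auto intro!: divide_pos_pos add_pos_pos)
  ultimately show "wC > 0" "wA > 0" by (simp_all add: wC_def wA_def)
qed

lemma load_rate_pos: "load_rate > 0"
  using gap_pos weights_pos xi_pos by (simp add: load_rate_def)

lemma load_nonneg: "\<forall>i. 0 \<le> y $ i \<Longrightarrow> 0 \<le> load y"
  using weights_pos by (simp add: load_def)

lemma load_deriv_le:
  assumes nonneg: "\<forall>i. 0 \<le> y $ i"
  shows "f y $ 2 + wC * f y $ 3 + wA * f y $ 4 \<le> - load_rate * load y"
proof -
  have "f y $ 2 + wC * f y $ 3 + wA * f y $ 4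
      \<le> beta * infectivity y - (rho + phi + mu) * y$2 + alpha * y$4 + omega * y$3
        + wC * (phi * y$2 - xi2 * y$3) + wA * (rho * y$2 - xi1 * y$4)"
    using incidence_nonneg_bounds(2)[OF nonneg] by (simp add: rhs_nth xi1_def xi2_def)
  also have "\<dots> = (beta - (rho + phi + mu) + wC * phi + wA * rho) * y$2
        + (beta * etaC + omega - wC * xi2) * y$3 + (beta * etaA + alpha - wA * xi1) * y$4"
    by (simp add: infectivity_def algebra_simps)
  also have "\<dots> = (- gap / 2) * y$2 + (- slack * xi2) * y$3 + (- slack * xi1) * y$4"
  proof -
    define P1 where "P1 = (beta * etaC + omega) / xi2"
    define P2 where "P2 = (beta * etaA + alpha) / xi1"
    have "slack * (phi + rho) = gap / 2" unfolding slack_def using phi rho by (simp add: field_simps)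
    moreover have "gap = (rho + phi + mu) - beta - phi * P1 - rho * P2"
      unfolding gap_def P1_def P2_def by simp
    moreover have "wC = P1 + slack" "wA = P2 + slack" by (simp_all add: wC_def wA_def P1_def P2_def)
    ultimately have "beta - (rho + phi + mu) + wC * phi + wA * rho = - gap / 2"
      by (simp add: algebra_simps)
    moreover have "beta * etaC + omega - wC * xi2 = - slack * xi2"
      "beta * etaA + alpha - wA * xi1 = - slack * xi1"
      unfolding wC_def wA_def using xi_pos by (simp_all add: field_simps)
    ultimately show ?thesis by simp
  qed
  also have "\<dots> \<le> (- load_rate) * y$2 + (- load_rate * wC) * y$3 + (- load_rate * wA) * y$4"
  proof -
    have "load_rate \<le> gap / 2" "load_rate \<le> slack * xi2 / wC" "load_rate \<le> slack * xi1 / wA"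
      unfolding load_rate_def by linarith+
    then have "load_rate \<le> gap / 2" "load_rate * wC \<le> slack * xi2" "load_rate * wA \<le> slack * xi1"
      using weights_pos by (simp_all add: le_divide_eq)
    then show ?thesis using nonneg by (intro add_mono mult_right_mono) auto
  qed
  also have "\<dots> = - load_rate * load y" by (simp add: load_def algebra_simps)
  finally show ?thesis .
qed

definition load_bound :: "real" where
  "load_bound = max 1 (max (etaC / wC) (etaA / wA))"

lemma infectivity_le_load:
  assumes "\<forall>i. 0 \<le> y $ i"
  shows "infectivity y \<le> load_bound * load y"
proof -
  have "infectivity y = 1 * y$2 + (etaC / wC) * (wC * y$3) + (etaA / wA) * (wA * y$4)"
    using weights_pos by (simp add: infectivity_def)
  also have "\<dots> \<le> load_bound * y$2 + load_bound * (wC * y$3) + load_bound * (wA * y$4)"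
    using assms weights_pos by (intro add_mono mult_right_mono) (auto simp: load_bound_def)
  also have "\<dots> = load_bound * load y" by (simp add: load_def algebra_simps)
  finally show ?thesis .
qed

text \<open>The deviations \<open>devP\<close> and \<open>devE\<close> of \<open>S + E\<close> and \<open>E\<close> from their disease-free values
  obey a linear system forced only by the incidence, which is at most a multiple of \<open>load\<close>.\<close>
definition devP :: "real^5 \<Rightarrow> real" where
  "devP y = y$1 + y$5 - Lam / mu"
definition devE :: "real^5 \<Rightarrow> real" where
  "devE y = y$5 - E0"
definition A0 :: "real" where
  "A0 = 2 * psi\<^sup>2 / ((mu + theta + psi) * mu) + 1"
definition K0 :: "real" where
  "K0 = A0 * (beta * load_bound)\<^sup>2 / (mu * load_rate) + 1"
definition lyap :: "real^5 \<Rightarrow> real" where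
  "lyap y = A0 * (devP y)\<^sup>2 + (devE y)\<^sup>2 + K0 * (load y)\<^sup>2"
definition lyap_deriv :: "real^5 \<Rightarrow> real" where
  "lyap_deriv y = 2 * A0 * devP y * (f y $ 1 + f y $ 5) + 2 * devE y * f y $ 5
                  + 2 * K0 * load y * (f y $ 2 + wC * f y $ 3 + wA * f y $ 4)"
definition decay :: "real" where
  "decay = min (mu / 2) load_rate"

lemma A0_K0_ge_1: "A0 \<ge> 1" "K0 \<ge> 1"
  using mu theta psi load_rate_pos by (simp_all add: A0_def K0_def)

lemma decay_pos: "decay > 0"
  using mu load_rate_pos by (simp add: decay_def)

lemma lyap_has_real_derivative:
  assumes "ode_solution f x" "t > 0"
  shows "((\<lambda>t. lyap (x t)) has_real_derivative lyap_deriv (x t)) (at t)"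
  unfolding lyap_def lyap_deriv_def devP_def devE_def load_def
  by (auto intro!: derivative_eq_intros ode_solution_component_deriv[OF assms]
      simp: algebra_simps)

lemma lyap_deriv_le:
  assumes nonneg: "\<forall>i. 0 \<le> y $ i"
  shows "lyap_deriv y \<le> - decay * lyap y"
proof -
  have "f y $ 1 + f y $ 5 = - mu * devP y - incidence y"
    using mu by (simp add: devP_def rhs_nth field_simps)
  moreover have "f y $ 5 = psi * devP y - (mu + theta + psi) * devE y"
    using dfe_coordinates(2) by (simp add: devP_def devE_def rhs_nth algebra_simps)
  moreover have "beta * infectivity y \<le> beta * (load_bound * load y)"
    using infectivity_le_load[OF nonneg] beta by (intro mult_left_mono) auto
  then have "incidence y \<le> (beta * load_bound) * load y"
    using incidence_nonneg_bounds(2)[OF nonneg] unfolding mult.assoc by linarith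
  then have "2 * A0 * devP y * (- mu * devP y - incidence y)
      + 2 * devE y * (psi * devP y - (mu + theta + psi) * devE y)
      + 2 * K0 * load y * (f y $ 2 + wC * f y $ 3 + wA * f y $ 4) \<le> - decay * lyap y"
    unfolding decay_def lyap_def
    using mu theta psi beta load_rate_pos incidence_nonneg_bounds(1)[OF nonneg]
      load_nonneg[OF nonneg] load_deriv_le[OF nonneg]
    by (intro quadratic_lyapunov_estimate) (auto simp: A0_def K0_def load_bound_def)
  ultimately show ?thesis by (simp add: lyap_deriv_def)
qed

lemma lyap_decay:
  assumes sol: "ode_solution f x" and "\<forall>i. 0 \<le> x 0 $ i" and "t \<ge> 0"
  shows "lyap (x t) \<le> lyap (x 0) * exp (- decay * t)"
proof -
  have "lyap (x t) \<le> lyap (x 0) * exp (- decay * (t - 0))"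
  proof (rule gronwall_exp_bound[OF \<open>t \<ge> 0\<close>])
    show "continuous_on {0..t} (\<lambda>t. lyap (x t))"
      using continuous_on_subset[OF ode_solution_continuous_on[OF sol], of "{0..t}"]
      unfolding lyap_def devP_def devE_def load_def by (auto intro!: continuous_intros)
    fix s assume "0 < s" "s < t"
    show "((\<lambda>t. lyap (x t)) has_real_derivative lyap_deriv (x s)) (at s)"
      using sol \<open>0 < s\<close> by (rule lyap_has_real_derivative)
    show "lyap_deriv (x s) \<le> - decay * lyap (x s)"
      using nonneg_invariant[OF sol assms(2)] \<open>0 < s\<close> by (intro lyap_deriv_le) auto
  qed
  then show ?thesis by simp
qed

lemma dist_dfe_squared:
  "(dist y dfe)\<^sup>2 = (devP y - devE y)\<^sup>2 + (y$2)\<^sup>2 + (y$3)\<^sup>2 + (y$4)\<^sup>2 + (devE y)\<^sup>2"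
proof -
  have "y$1 - S0 = devP y - devE y" using dfe_coordinates(1) by (simp add: devP_def devE_def algebra_simps)
  then show ?thesis by (simp add: dist_vec5_squared dfe_def devE_def)
qed

lemma infected_sq_le_load_sq:
  "\<exists>c\<ge>0. \<forall>y. (\<forall>i. 0 \<le> y $ i) \<longrightarrow> (y$2)\<^sup>2 + (y$3)\<^sup>2 + (y$4)\<^sup>2 \<le> c * (load y)\<^sup>2"
proof -
  define m where "m = min 1 (min wC wA)"
  have "m > 0" "m \<le> 1" "m \<le> wC" "m \<le> wA" using weights_pos by (auto simp: m_def)
  have square: "z\<^sup>2 \<le> (load y)\<^sup>2 / m\<^sup>2" if "m * z \<le> load y" "0 \<le> z" for z y
  proof -
    have "(m * z)\<^sup>2 \<le> (load y)\<^sup>2" using that \<open>m > 0\<close> by (intro power_mono) auto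
    then show ?thesis using \<open>m > 0\<close> by (simp add: power_mult_distrib le_divide_eq mult.commute)
  qed
  have "(y$2)\<^sup>2 + (y$3)\<^sup>2 + (y$4)\<^sup>2 \<le> 3 / m\<^sup>2 * (load y)\<^sup>2" if "\<forall>i. 0 \<le> y $ i" for y
  proof -
    have "0 \<le> y$2" "0 \<le> y$3" "0 \<le> y$4" using that by auto
    have "m * y$2 \<le> y$2" "m * y$3 \<le> wC * y$3" "m * y$4 \<le> wA * y$4"
      using \<open>0 \<le> y$2\<close> \<open>0 \<le> y$3\<close> \<open>0 \<le> y$4\<close> \<open>m \<le> 1\<close> \<open>m \<le> wC\<close> \<open>m \<le> wA\<close>
        mult_right_mono[of m 1 "y$2"] by (auto intro: mult_right_mono)
    moreover have "0 \<le> wC * y$3" "0 \<le> wA * y$4"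
      using \<open>0 \<le> y$3\<close> \<open>0 \<le> y$4\<close> weights_pos by simp_all
    ultimately have "m * y$2 \<le> load y" "m * y$3 \<le> load y" "m * y$4 \<le> load y"
      using \<open>0 \<le> y$2\<close> unfolding load_def by linarith+
    then have "(y$2)\<^sup>2 + (y$3)\<^sup>2 + (y$4)\<^sup>2 \<le> 3 * ((load y)\<^sup>2 / m\<^sup>2)"
      using square[of "y$2" y] square[of "y$3" y] square[of "y$4" y] \<open>0 \<le> y$2\<close> \<open>0 \<le> y$3\<close> \<open>0 \<le> y$4\<close>
      by linarith
    then show ?thesis by simp
  qed
  then show ?thesis by (intro exI[of _ "3 / m\<^sup>2"]) auto
qed

lemma dist_dfe_sq_le_lyap: "\<exists>C\<ge>0. \<forall>y. (\<forall>i. 0 \<le> y $ i) \<longrightarrow> (dist y dfe)\<^sup>2 \<le> C * lyap y"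
proof -
  obtain c where "c \<ge> 0" and infected:
    "\<And>y. \<forall>i. 0 \<le> y $ i \<Longrightarrow> (y$2)\<^sup>2 + (y$3)\<^sup>2 + (y$4)\<^sup>2 \<le> c * (load y)\<^sup>2"
    using infected_sq_le_load_sq by blast
  have "(dist y dfe)\<^sup>2 \<le> (3 + c) * lyap y" if "\<forall>i. 0 \<le> y $ i" for y
  proof -
    have "(dist y dfe)\<^sup>2 \<le> 2 * (devP y)\<^sup>2 + 3 * (devE y)\<^sup>2 + c * (load y)\<^sup>2"
      unfolding dist_dfe_squared
      using infected[OF that] two_mult_le_weighted_squares[of 1 "- devP y" "devE y"]
      by (simp add: power2_diff)
    moreover have "(devP y)\<^sup>2 \<le> A0 * (devP y)\<^sup>2" "(load y)\<^sup>2 \<le> K0 * (load y)\<^sup>2"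
      using A0_K0_ge_1 mult_right_mono[of 1 A0 "(devP y)\<^sup>2"] mult_right_mono[of 1 K0 "(load y)\<^sup>2"]
      by simp_all
    moreover have "c * (load y)\<^sup>2 \<le> c * (K0 * (load y)\<^sup>2)"
      using calculation(3) \<open>c \<ge> 0\<close> by (intro mult_left_mono) auto
    moreover have "0 \<le> c * (A0 * (devP y)\<^sup>2 + (devE y)\<^sup>2)" "0 \<le> K0 * (load y)\<^sup>2" "0 \<le> (devP y)\<^sup>2"
      using A0_K0_ge_1 \<open>c \<ge> 0\<close> by simp_all
    moreover have "(3 + c) * lyap y = 3 * (A0 * (devP y)\<^sup>2) + 3 * (devE y)\<^sup>2
        + 3 * (K0 * (load y)\<^sup>2) + c * (A0 * (devP y)\<^sup>2 + (devE y)\<^sup>2) + c * (K0 * (load y)\<^sup>2)"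
      by (simp add: lyap_def algebra_simps)
    ultimately show ?thesis by linarith
  qed
  then show ?thesis using \<open>c \<ge> 0\<close> by (intro exI[of _ "3 + c"]) auto
qed

lemma lyap_le_dist_dfe_sq: "\<exists>C\<ge>0. \<forall>y. lyap y \<le> C * (dist y dfe)\<^sup>2"
proof -
  define w where "w = 1 + wC + wA"
  have "w \<ge> 0" using weights_pos by (simp add: w_def)
  have "lyap y \<le> (4 * A0 + 1 + K0 * w\<^sup>2) * (dist y dfe)\<^sup>2" for y
  proof -
    define D where "D = dist y dfe"
    have comp: "\<bar>y$i - dfe$i\<bar> \<le> D" for i
      using component_le_norm_cart[of "y - dfe" i] by (simp add: D_def dist_norm)
    have sq: "z\<^sup>2 \<le> (c * D)\<^sup>2" if "\<bar>z\<bar> \<le> c * D" for z c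
      using that abs_le_square_iff[of z "c * D"] by fastforce
    have "\<bar>devP y\<bar> \<le> 2 * D"
      using comp[of 1] comp[of 5] dfe_coordinates(1) by (simp add: devP_def dfe_def abs_le_iff)
    moreover have "\<bar>devE y\<bar> \<le> 1 * D" using comp[of 5] by (simp add: devE_def dfe_def)
    moreover have "\<bar>load y\<bar> \<le> w * D"
    proof -
      have "\<bar>load y\<bar> \<le> \<bar>y$2\<bar> + \<bar>wC * y$3\<bar> + \<bar>wA * y$4\<bar>"
        unfolding load_def by (rule order_trans[OF abs_triangle_ineq add_right_mono[OF abs_triangle_ineq]])
      also have "\<dots> = \<bar>y$2\<bar> + wC * \<bar>y$3\<bar> + wA * \<bar>y$4\<bar>"
        using weights_pos by (simp add: abs_mult)
      also have "\<dots> \<le> D + wC * D + wA * D"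
        using comp[of 2] comp[of 3] comp[of 4] weights_pos
        by (intro add_mono mult_left_mono) (auto simp: dfe_def)
      finally show ?thesis by (simp add: w_def algebra_simps)
    qed
    ultimately have "(devP y)\<^sup>2 \<le> 4 * D\<^sup>2" "(devE y)\<^sup>2 \<le> D\<^sup>2" "(load y)\<^sup>2 \<le> w\<^sup>2 * D\<^sup>2"
      using sq by (fastforce simp: power_mult_distrib)+
    then have "lyap y \<le> A0 * (4 * D\<^sup>2) + D\<^sup>2 + K0 * (w\<^sup>2 * D\<^sup>2)"
      unfolding lyap_def using A0_K0_ge_1 by (intro add_mono mult_left_mono) auto
    then show ?thesis by (simp add: D_def algebra_simps)
  qed
  then show ?thesis using A0_K0_ge_1 \<open>w \<ge> 0\<close> by (intro exI[of _ "4 * A0 + 1 + K0 * w\<^sup>2"]) auto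
qed

lemma exponential_stability:
  "\<exists>C\<ge>0. \<forall>x t. ode_solution f x \<longrightarrow> x 0 \<in> Omega_P Lam mu psi theta \<longrightarrow> t \<ge> 0 \<longrightarrow>
     (dist (x t) dfe)\<^sup>2 \<le> C * (dist (x 0) dfe)\<^sup>2 * exp (- decay * t)"
proof -
  obtain C1 where "C1 \<ge> 0" and lower: "\<And>y. \<forall>i. 0 \<le> y $ i \<Longrightarrow> (dist y dfe)\<^sup>2 \<le> C1 * lyap y"
    using dist_dfe_sq_le_lyap by blast
  obtain C2 where "C2 \<ge> 0" and upper: "\<And>y. lyap y \<le> C2 * (dist y dfe)\<^sup>2"
    using lyap_le_dist_dfe_sq by blast
  have "(dist (x t) dfe)\<^sup>2 \<le> C1 * C2 * (dist (x 0) dfe)\<^sup>2 * exp (- decay * t)"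
    if sol: "ode_solution f x" and "x 0 \<in> Omega_P Lam mu psi theta" "t \<ge> 0" for x t
  proof -
    have nonneg0: "\<forall>i. 0 \<le> x 0 $ i" using that(2) by (simp add: Omega_P_def)
    have "(dist (x t) dfe)\<^sup>2 \<le> C1 * lyap (x t)"
      using lower nonneg_invariant[OF sol nonneg0 \<open>t \<ge> 0\<close>] by blast
    also have "\<dots> \<le> C1 * (lyap (x 0) * exp (- decay * t))"
      using lyap_decay[OF sol nonneg0 \<open>t \<ge> 0\<close>] \<open>C1 \<ge> 0\<close> by (rule mult_left_mono)
    also have "\<dots> \<le> C1 * (C2 * (dist (x 0) dfe)\<^sup>2 * exp (- decay * t))"
      using upper \<open>C1 \<ge> 0\<close> by (intro mult_left_mono mult_right_mono) auto
    finally show ?thesis by (simp add: mult.assoc)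
  qed
  then show ?thesis using \<open>C1 \<ge> 0\<close> \<open>C2 \<ge> 0\<close> by (intro exI[of _ "C1 * C2"]) auto
qed

end

theorem mainTheorem3:
  fixes Lam mu beta rho phi alpha omega d psi theta etaC etaA :: real
  assumes "Lam > 0" "mu > 0" "beta > 0" "rho > 0" "phi > 0" "alpha > 0" "omega > 0"
    and "d \<ge> 0" "psi \<ge> 0" "theta \<ge> 0"
    and "0 < etaC" "etaC \<le> 1" "etaA \<ge> 1"
    and "R0_hiv mu beta rho phi alpha omega d etaC etaA < 1"
  shows "gas_in (hiv_rhs Lam mu beta rho phi alpha omega d psi theta etaC etaA)
                (Omega_P Lam mu psi theta)
                (mk5 ((theta + mu) * Lam / (mu * (theta + psi + mu))) 0 0 0
                     (psi * Lam / (mu * (theta + psi + mu))))"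
proof -
  interpret hiv_prep_subthreshold Lam mu beta rho phi alpha omega d psi theta etaC etaA
    using assms by unfold_locales
  obtain C where "C \<ge> 0" and "\<And>x t. ode_solution f x \<Longrightarrow> x 0 \<in> Omega_P Lam mu psi theta \<Longrightarrow> t \<ge> 0 \<Longrightarrow>
      (dist (x t) dfe)\<^sup>2 \<le> C * (dist (x 0) dfe)\<^sup>2 * exp (- decay * t)"
    using exponential_stability by blast
  then have "gas_in f (Omega_P Lam mu psi theta) dfe"
    by (intro gas_in_if_exponential_decay[where f = f, OF dfe_in_Omega_P rhs_dfe decay_pos])
  then show ?thesis by (simp add: dfe_def S0_def E0_def)
qed

end
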